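(* Let $a\ge2$ be an integer, $m\ge1$, $n\ge1$, and let $\mathcal{A}_n$ be the arrangement in $\mathbb{R}^n$ with hyperplanes $x_i=0$ for all $1\le i\le n$, $x_i=x_j$ for all $1\le i<j\le n$, and $x_i=a^rx_j$ for all $1\le i\neq j\le n$ and $1\le r\le m$. Then $$\chi_{\mathcal{A}_n}(t)=(t-1)\prod_{j=1}^{n-1}(t-1-mn-j).$$
   Context: For a finite arrangement $\mathcal{A}$ of affine hyperplanes in $\mathbb{R}^n$, the characteristic polynomial is $\chi_{\mathcal{A}}(t)=\sum_{\mathcal{B}}(-1)^{\#\mathcal{B}}t^{n-\operatorname{rank}(\mathcal{B})}$, the sum over subsets $\mathcal{B}\subseteq\mathcal{A}$ whose hyperplanes have nonempty common intersection, where $\operatorname{rank}(\mathcal{B})$ is the dimension of the span of the normal vectors of the hyperplanes in $\mathcal{B}$. *)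

theory Defs
  imports "HOL-Analysis.Analysis" "HOL-Computational_Algebra.Polynomial"
begin

text \<open>Affine hyperplane in R^n (coordinates indexed by the finite type 'n, n = CARD('n)).\<close>
definition hyperplane :: "real^'n \<Rightarrow> real \<Rightarrow> (real^'n) set" where
  "hyperplane c d = {x. c \<bullet> x = d}"

definition normals :: "(real^'n) set \<Rightarrow> (real^'n) set" where
  "normals H = {c. c \<noteq> 0 \<and> (\<exists>d. H = hyperplane c d)}"

definition arr_rank :: "(real^'n) set set \<Rightarrow> nat" where
  "arr_rank B = dim (span (\<Union>H\<in>B. normals H))"

definition char_poly :: "(real^'n) set set \<Rightarrow> real poly" where
  "char_poly A = (\<Sum>B\<in>{B. B \<subseteq> A \<and> \<Inter>B \<noteq> {}}.
      (-1) ^ card B * monom 1 (CARD('n) - arr_rank B))"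

definition arrA :: "int \<Rightarrow> nat \<Rightarrow> (real^'n) set set" where
  "arrA a m =
     {hyperplane (axis i 1) 0 | i. True}
   \<union> {hyperplane (axis i 1 - axis j 1) 0 | i j. i \<noteq> j}
   \<union> {hyperplane (axis i 1 - (real_of_int a ^ r) *\<^sub>R axis j 1) 0 | i j r.
        i \<noteq> j \<and> 1 \<le> r \<and> r \<le> m}"

end

theory Submission
  imports Defs
begin

text \<open>
  We evaluate the characteristic polynomial at \<open>t = N + 1\<close> for large \<open>N\<close>.  A subset of the
  arrangement is a system of constraints \<open>x\<^sub>i = 0\<close> and \<open>x\<^sub>i = a\<^sup>r x\<^sub>j\<close>.  In the graph whose edges
  are the constraints of the second kind, weighted by \<open>\<plusminus>r\<close>, call a component live if it meets no
  constraint \<open>x\<^sub>i = 0\<close> and carries no cycle of nonzero weight; the real solution space is spanned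
  by one vector per live component, so the corank of the subset is the number of live
  components.  The same number governs a finite model in which a coordinate is either \<open>0\<close> or
  \<open>a\<^sup>u\<close> with \<open>u\<close> read modulo \<open>N\<close>: once \<open>N\<close> exceeds the relevant cycle weights, the model has
  \<open>(N + 1)\<^sup>k\<close> solutions for \<open>k\<close> live components.  By inclusion-exclusion \<open>\<chi>(N + 1)\<close> is then the
  number of model points violating every constraint, i.e. of maps \<open>z\<close> from the coordinates to
  \<open>\<int>/N\<close> with \<open>z\<^sub>i - z\<^sub>j mod N \<notin> {0..m}\<close>: \<open>n\<close> labelled points on a cycle of length \<open>N\<close> with all
  gaps larger than \<open>m\<close>.  Rotating one point to \<open>0\<close> and cutting the cycle there leaves \<open>n - 1\<close>
  points on a segment of length \<open>N - 2m - 1\<close> with gaps larger than \<open>m\<close>, counted by the falling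
  factorial \<open>(N - nm - 1)\<^sub>n\<^sub>-\<^sub>1\<close>.  Two polynomials agreeing at infinitely many points are equal.
\<close>

section \<open>Constraint graphs\<close>

text \<open>\<open>Vanish i\<close> stands for \<open>x\<^sub>i = 0\<close> and \<open>Ratio i j r\<close> for \<open>x\<^sub>i = b\<^sup>r x\<^sub>j\<close>, the base \<open>b\<close> being fixed
  later; \<open>x\<^sub>i = x\<^sub>j\<close> is \<open>Ratio i j 0\<close>.\<close>

datatype 'n constr = Vanish 'n | Ratio 'n 'n nat

definition constr_edge :: "'n constr set \<Rightarrow> 'n \<Rightarrow> 'n \<Rightarrow> int \<Rightarrow> bool" where
  "constr_edge C i j w \<longleftrightarrow> (\<exists>r. Ratio i j r \<in> C \<and> w = int r) \<or> (\<exists>r. Ratio j i r \<in> C \<and> w = - int r)"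

inductive walk :: "'n constr set \<Rightarrow> 'n \<Rightarrow> 'n \<Rightarrow> int \<Rightarrow> bool" for C where
  walk_refl: "walk C i i 0"
| walk_step: "walk C i j k \<Longrightarrow> constr_edge C j l w \<Longrightarrow> walk C i l (k + w)"

lemma constr_edge_sym: "constr_edge C i j w \<Longrightarrow> constr_edge C j i (- w)"
  unfolding constr_edge_def by auto

lemma walk_edge: "constr_edge C i j w \<Longrightarrow> walk C i j w"
  using walk_step[OF walk_refl] by fastforce

lemma walk_trans: "walk C i j k \<Longrightarrow> walk C j l k' \<Longrightarrow> walk C i l (k + k')"
proof (rotate_tac, induction rule: walk.induct)
  case (walk_step j l k' l' w)
  then show ?case by (metis add.assoc walk.walk_step)
qed simp

lemma walk_sym: "walk C i j k \<Longrightarrow> walk C j i (- k)"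
proof (induction rule: walk.induct)
  case (walk_step i j k l w)
  from walk_trans[OF walk_edge[OF constr_edge_sym[OF walk_step(2)]] walk_step.IH]
  show ?case by (simp add: add.commute)
qed (simp add: walk_refl)

definition vanishing :: "'n constr set \<Rightarrow> 'n \<Rightarrow> bool" where
  "vanishing C i \<longleftrightarrow> (\<exists>j k. walk C i j k \<and> Vanish j \<in> C) \<or> (\<exists>k. k \<noteq> 0 \<and> walk C i i k)"

lemma vanishing_if_Vanish: "Vanish i \<in> C \<Longrightarrow> vanishing C i"
  unfolding vanishing_def by (blast intro: walk_refl)

lemma vanishing_walk: assumes "walk C i j k" "vanishing C j" shows "vanishing C i"
proof -
  consider j' k' where "walk C j j' k'" "Vanish j' \<in> C" | k' where "k' \<noteq> 0" "walk C j j k'"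
    using assms(2) unfolding vanishing_def by blast
  then show ?thesis
  proof cases
    case 1
    then show ?thesis
      using walk_trans[OF assms(1) 1(1)] unfolding vanishing_def by blast
  next
    case 2
    have "walk C i i (k + k' + - k)"
      using walk_trans[OF walk_trans[OF assms(1) 2(2)] walk_sym[OF assms(1)]] .
    then show ?thesis
      using 2(1) unfolding vanishing_def by auto
  qed
qed

lemma vanishing_walk_iff: "walk C i j k \<Longrightarrow> vanishing C i \<longleftrightarrow> vanishing C j"
  using vanishing_walk walk_sym by metis

lemma walk_weight_unique:
  assumes "\<not> vanishing C i" "walk C i j k" "walk C i j k'" shows "k = k'"
proof (rule ccontr)
  assume "k \<noteq> k'"
  then have "k + - k' \<noteq> 0"
    by simp
  moreover have "walk C i i (k + - k')"
    using walk_trans[OF assms(2) walk_sym[OF assms(3)]] .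
  ultimately have "vanishing C i"
    unfolding vanishing_def by blast
  then show False
    using assms(1) by contradiction
qed

text \<open>\<open>rep C i\<close> is some vertex of the component of \<open>i\<close> and \<open>offset C i\<close> the weight of some walk
  to it; the weight is unique unless \<open>i\<close> is vanishing.\<close>

definition rep :: "'n constr set \<Rightarrow> 'n \<Rightarrow> 'n" where
  "rep C i = (SOME j. \<exists>k. walk C i j k)"

definition offset :: "'n constr set \<Rightarrow> 'n \<Rightarrow> int" where
  "offset C i = (SOME k. walk C i (rep C i) k)"

lemma walk_rep: "walk C i (rep C i) (offset C i)"
proof -
  have "\<exists>k. walk C i (rep C i) k"
    unfolding rep_def by (rule someI[of _ i]) (blast intro: walk_refl)
  then show ?thesis
    unfolding offset_def by (rule someI_ex)
qed

lemma rep_eq: assumes "walk C i j k" shows "rep C i = rep C j"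
proof -
  have "(\<exists>k. walk C i l k) \<longleftrightarrow> (\<exists>k. walk C j l k)" for l
    using walk_trans[OF assms, of l] walk_trans[OF walk_sym[OF assms], of l] by auto
  then show ?thesis
    unfolding rep_def by (simp only:)
qed

lemma rep_rep: "rep C (rep C i) = rep C i"
  using rep_eq[OF walk_rep] by metis

definition live_reps :: "'n constr set \<Rightarrow> 'n set" where
  "live_reps C = rep C ` {i. \<not> vanishing C i}"

lemma rep_in_live_reps: "\<not> vanishing C i \<Longrightarrow> rep C i \<in> live_reps C"
  unfolding live_reps_def by blast

lemma live_repsD:
  assumes "\<rho> \<in> live_reps C" shows "\<not> vanishing C \<rho>" "rep C \<rho> = \<rho>" "offset C \<rho> = 0"
proof -
  obtain i where i: "\<not> vanishing C i" "\<rho> = rep C i"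
    using assms unfolding live_reps_def by blast
  show live: "\<not> vanishing C \<rho>" and fixed: "rep C \<rho> = \<rho>"
    using i vanishing_walk_iff[OF walk_rep, of C i] rep_rep[of C i] by simp_all
  have "walk C \<rho> \<rho> (offset C \<rho>)"
    using walk_rep[of C \<rho>] fixed by simp
  then show "offset C \<rho> = 0"
    by (rule walk_weight_unique[OF live _ walk_refl])
qed

lemma constr_edge_offset:
  assumes "\<not> vanishing C i" "constr_edge C i j w"
  shows "\<not> vanishing C j" "rep C j = rep C i" "offset C i = w + offset C j"
proof -
  have ij: "walk C i j w"
    by (rule walk_edge[OF assms(2)])
  show "\<not> vanishing C j" "rep C j = rep C i"
    using vanishing_walk_iff[OF ij] rep_eq[OF ij] assms(1) by auto
  then have "walk C i (rep C i) (w + offset C j)"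
    using walk_trans[OF ij walk_rep] by simp
  then show "offset C i = w + offset C j"
    by (rule walk_weight_unique[OF assms(1) walk_rep])
qed

section \<open>Real solution spaces\<close>

fun holds :: "real \<Rightarrow> 'n constr \<Rightarrow> real^'n \<Rightarrow> bool" where
  "holds b (Vanish i) x \<longleftrightarrow> x$i = 0"
| "holds b (Ratio i j r) x \<longleftrightarrow> x$i = b^r * x$j"

definition solutions :: "real \<Rightarrow> 'n constr set \<Rightarrow> (real^'n) set" where
  "solutions b C = {x. \<forall>c\<in>C. holds b c x}"

lemma subspace_solutions: "subspace (solutions b C)"
proof -
  have "subspace {x. holds b c x}" for c
    by (cases c) (auto simp: subspace_def algebra_simps)
  then have "subspace (\<Inter>c\<in>C. {x. holds b c x})"
    by (rule subspace_Int)
  then show ?thesis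
    by (simp add: solutions_def Int_def INTER_eq)
qed

lemma solution_edge:
  assumes "b \<noteq> 0" "x \<in> solutions b C" "constr_edge C i j w" shows "x$i = b powi w * x$j"
proof -
  consider r where "Ratio i j r \<in> C" "w = int r" | r where "Ratio j i r \<in> C" "w = - int r"
    using assms(3) unfolding constr_edge_def by blast
  then show ?thesis
  proof cases
    case 1
    then show ?thesis
      using assms(2) by (auto simp: solutions_def)
  next
    case 2
    then have "x$j = b^r * x$i"
      using assms(2) by (fastforce simp: solutions_def)
    then show ?thesis
      using 2 assms(1) by (simp add: power_int_minus field_simps)
  qed
qed

lemma solution_walk:
  assumes "b \<noteq> 0" "x \<in> solutions b C" shows "walk C i j k \<Longrightarrow> x$i = b powi k * x$j"
proof (induction rule: walk.induct)
  case (walk_step i j k l w)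
  then show ?case
    using solution_edge[OF assms walk_step(2)] assms(1) by (simp add: power_int_add mult.assoc)
qed simp

lemma power_int_eq_1_iff:
  fixes b :: "'a :: linordered_field" assumes "b > 1" shows "b powi k = 1 \<longleftrightarrow> k = 0"
  using power_int_strict_increasing[OF _ assms, of k 0] power_int_strict_increasing[OF _ assms, of 0 k]
  by (cases k "0::int" rule: linorder_cases) auto

lemma solution_vanishing:
  assumes "b > 1" "x \<in> solutions b C" "vanishing C i" shows "x$i = 0"
proof -
  have b: "b \<noteq> 0"
    using assms(1) by simp
  consider j k where "walk C i j k" "Vanish j \<in> C" | k where "k \<noteq> 0" "walk C i i k"
    using assms(3) unfolding vanishing_def by blast
  then show ?thesis
  proof cases
    case 1
    then have "x$j = 0"
      using assms(2) by (fastforce simp: solutions_def)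
    then show ?thesis
      using solution_walk[OF b assms(2) 1(1)] by simp
  next
    case 2
    then have "x$i = b powi k * x$i"
      using solution_walk[OF b assms(2)] by blast
    then show ?thesis
      using power_int_eq_1_iff[OF assms(1)] 2(1) by (metis mult_cancel_right2)
  qed
qed

definition component_vector :: "real \<Rightarrow> 'n constr set \<Rightarrow> 'n \<Rightarrow> real^'n" where
  "component_vector b C \<rho> = (\<chi> i. if \<not> vanishing C i \<and> rep C i = \<rho> then b powi offset C i else 0)"

lemma component_vector_solution:
  assumes "b > 1" shows "component_vector b C \<rho> \<in> solutions b C"
  unfolding solutions_def
proof (intro CollectI ballI)
  fix c assume c: "c \<in> C"
  show "holds b c (component_vector b C \<rho>)"
  proof (cases c)
    case (Vanish j)
    then show ?thesis
      using vanishing_if_Vanish[of j C] c by (simp add: component_vector_def)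
  next
    case (Ratio i j r)
    then have e: "constr_edge C i j (int r)"
      using c unfolding constr_edge_def by blast
    show ?thesis
    proof (cases "vanishing C i")
      case True
      then show ?thesis
        using Ratio vanishing_walk_iff[OF walk_edge[OF e]] by (simp add: component_vector_def)
    next
      case False
      have "b powi offset C i = b^r * b powi offset C j"
        using constr_edge_offset(3)[OF False e] assms by (simp add: power_int_add)
      then show ?thesis
        using Ratio False constr_edge_offset(1,2)[OF False e] by (simp add: component_vector_def)
    qed
  qed
qed

lemma solution_in_span:
  assumes "b > 1" "x \<in> solutions b C" shows "x \<in> span (component_vector b C ` live_reps C)"
proof -
  have "x = (\<Sum>\<rho>\<in>live_reps C. x$\<rho> *\<^sub>R component_vector b C \<rho>)"
  proof (rule vec_eq_iff[THEN iffD2], rule allI)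
    fix i
    show "x$i = (\<Sum>\<rho>\<in>live_reps C. x$\<rho> *\<^sub>R component_vector b C \<rho>)$i"
    proof (cases "vanishing C i")
      case True
      then show ?thesis
        using solution_vanishing[OF assms] by (simp add: component_vector_def)
    next
      case False
      have "(\<Sum>\<rho>\<in>live_reps C. x$\<rho> *\<^sub>R component_vector b C \<rho>)$i
          = (\<Sum>\<rho>\<in>live_reps C. if \<rho> = rep C i then x$\<rho> * b powi offset C i else 0)"
        unfolding sum_component by (rule sum.cong) (use False in \<open>auto simp: component_vector_def\<close>)
      also have "\<dots> = x$(rep C i) * b powi offset C i"
        using rep_in_live_reps[OF False] by simp
      also have "\<dots> = x$i"
        using solution_walk[OF _ assms(2) walk_rep, of i] assms(1) by simp
      finally show ?thesis
        by simp
    qed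
  qed
  also have "\<dots> \<in> span (component_vector b C ` live_reps C)"
    by (intro span_sum span_mul span_base) auto
  finally show ?thesis .
qed

lemma dim_solutions:
  assumes "b > 1" shows "dim (solutions b C) = card (live_reps C)"
proof -
  let ?B = "component_vector b C ` live_reps C"
  have span: "span ?B = solutions b C"
    using component_vector_solution[OF assms] solution_in_span[OF assms] subspace_solutions
    by (intro span_subspace) auto
  have coord: "component_vector b C \<rho> $ \<rho>' \<noteq> 0 \<longleftrightarrow> \<rho> = \<rho>'"
    if "\<rho> \<in> live_reps C" "\<rho>' \<in> live_reps C" for \<rho> \<rho>'
    using live_repsD[OF that(2)] assms by (simp add: component_vector_def)
  have inj: "inj_on (component_vector b C) (live_reps C)"
    by (rule inj_onI) (metis coord)
  have "pairwise orthogonal ?B"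
    unfolding pairwise_def orthogonal_def inner_vec_def
    by (auto simp: component_vector_def intro!: sum.neutral)
  moreover have "0 \<notin> ?B"
    using coord by force
  ultimately have "independent ?B"
    by (rule pairwise_orthogonal_independent)
  then show ?thesis
    using dim_span_eq_card_independent span card_image[OF inj] by metis
qed

fun normal :: "real \<Rightarrow> 'n constr \<Rightarrow> real^'n" where
  "normal b (Vanish i) = axis i 1"
| "normal b (Ratio i j r) = axis i 1 - (b^r) *\<^sub>R axis j 1"

definition constr_hyperplane :: "real \<Rightarrow> 'n constr \<Rightarrow> (real^'n) set" where
  "constr_hyperplane b c = hyperplane (normal b c) 0"

lemma inner_normal_eq_0_iff: "normal b c \<bullet> x = 0 \<longleftrightarrow> holds b c x"
  by (cases c) (auto simp: inner_diff_left inner_axis')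

lemma hyperplane_eq_imp_normal_in_span:
  assumes "v \<noteq> 0" "hyperplane v 0 = hyperplane c d" shows "c \<in> span {v}"
proof -
  have "0 \<in> hyperplane c d"
    unfolding assms(2)[symmetric] by (simp add: hyperplane_def)
  then have d: "d = 0"
    by (simp add: hyperplane_def)
  \<comment> \<open>the component \<open>x\<close> of \<open>c\<close> orthogonal to \<open>v\<close> lies on the common hyperplane, so \<open>c \<bullet> x = 0\<close>\<close>
  define k where "k = (c \<bullet> v) / (v \<bullet> v)"
  define x where "x = c - k *\<^sub>R v"
  have vx: "v \<bullet> x = 0"
    using assms(1) by (simp add: x_def k_def inner_diff_right inner_commute[of c v])
  then have "c \<bullet> x = 0"
    using assms(2) d by (auto simp: hyperplane_def set_eq_iff)
  then have "x \<bullet> x = 0"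
    using vx by (simp add: x_def inner_diff_left inner_commute)
  then have "c = k *\<^sub>R v"
    by (simp add: x_def)
  then show ?thesis
    by (simp add: span_base span_mul)
qed

lemma span_normals_constr_hyperplanes:
  assumes "\<forall>c\<in>C. normal b c \<noteq> 0"
  shows "span (\<Union>H\<in>constr_hyperplane b ` C. normals H) = span (normal b ` C)"
proof (rule span_eq[THEN iffD2], rule conjI)
  show "(\<Union>H\<in>constr_hyperplane b ` C. normals H) \<subseteq> span (normal b ` C)"
  proof
    fix u assume "u \<in> (\<Union>H\<in>constr_hyperplane b ` C. normals H)"
    then obtain c d where c: "c \<in> C" "constr_hyperplane b c = hyperplane u d"
      by (auto simp: normals_def)
    then have "u \<in> span {normal b c}"
      using assms by (intro hyperplane_eq_imp_normal_in_span) (auto simp: constr_hyperplane_def)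
    moreover have "span {normal b c} \<subseteq> span (normal b ` C)"
      using c by (intro span_mono) auto
    ultimately show "u \<in> span (normal b ` C)"
      by blast
  qed
  show "normal b ` C \<subseteq> span (\<Union>H\<in>constr_hyperplane b ` C. normals H)"
    using assms by (auto simp: normals_def constr_hyperplane_def intro!: span_base)
qed

lemma orthogonal_span_normals_iff:
  "(\<forall>x\<in>span (normal b ` C). orthogonal x y) \<longleftrightarrow> y \<in> solutions b C"
proof
  assume "\<forall>x\<in>span (normal b ` C). orthogonal x y"
  then show "y \<in> solutions b C"
    unfolding solutions_def orthogonal_def inner_normal_eq_0_iff[symmetric] by (simp add: span_base)
next
  assume "y \<in> solutions b C"
  then have "orthogonal y x" if "x \<in> normal b ` C" for x
    using that inner_normal_eq_0_iff[of b _ y] by (auto simp: solutions_def orthogonal_def inner_commute)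
  then show "\<forall>x\<in>span (normal b ` C). orthogonal x y"
    using orthogonal_to_span orthogonal_commute by metis
qed

lemma arr_rank_constr_hyperplanes:
  assumes "b > 1" "\<forall>c\<in>C. normal b c \<noteq> 0"
  shows "arr_rank (constr_hyperplane b ` C :: (real^'n) set set) = CARD('n) - card (live_reps C)"
proof -
  let ?S = "normal b ` C"
  have "dim {y \<in> UNIV. \<forall>x\<in>span ?S. orthogonal x y} + dim (span ?S) = CARD('n)"
    using dim_subspace_orthogonal_to_vectors[of "span ?S" UNIV] by (simp add: subspace_span)
  then have "dim (span ?S) = CARD('n) - card (live_reps C)"
    using dim_solutions[OF assms(1), of C] orthogonal_span_normals_iff[of b C] by simp
  then show ?thesis
    unfolding arr_rank_def using span_normals_constr_hyperplanes[OF assms(2)] by simp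
qed

section \<open>A modular model of the solution spaces\<close>

text \<open>\<open>None\<close> stands for the coordinate \<open>0\<close> and \<open>Some u\<close> for \<open>b\<^sup>u\<close>, with exponents read modulo \<open>N\<close>.\<close>

fun holds_mod :: "nat \<Rightarrow> 'n constr \<Rightarrow> ('n \<Rightarrow> int option) \<Rightarrow> bool" where
  "holds_mod N (Vanish i) y \<longleftrightarrow> y i = None"
| "holds_mod N (Ratio i j r) y \<longleftrightarrow> y i = map_option (\<lambda>u. (u + int r) mod int N) (y j)"

definition mod_values :: "nat \<Rightarrow> int option set" where
  "mod_values N = insert None (Some ` {0..<int N})"

definition mod_points :: "nat \<Rightarrow> ('n \<Rightarrow> int option) set" where
  "mod_points N = {y. \<forall>i. y i \<in> mod_values N}"

definition mod_solutions :: "nat \<Rightarrow> 'n constr set \<Rightarrow> ('n \<Rightarrow> int option) set" where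
  "mod_solutions N C = {y \<in> mod_points N. \<forall>c\<in>C. holds_mod N c y}"

lemma mod_values_shift_0: "v \<in> mod_values N \<Longrightarrow> map_option (\<lambda>u. (u + 0) mod int N) v = v"
  by (auto simp: mod_values_def)

lemma mod_solution_edge:
  assumes "y \<in> mod_solutions N C" "constr_edge C i j w"
  shows "y i = map_option (\<lambda>u. (u + w) mod int N) (y j)"
proof -
  have holds: "holds_mod N c y" if "c \<in> C" for c
    using assms(1) that by (simp add: mod_solutions_def)
  consider r where "Ratio i j r \<in> C" "w = int r" | r where "Ratio j i r \<in> C" "w = - int r"
    using assms(2) unfolding constr_edge_def by blast
  then show ?thesis
  proof cases
    case 1
    then show ?thesis
      using holds[OF 1(1)] by simp
  next
    case 2
    have ji: "y j = map_option (\<lambda>u. (u + int r) mod int N) (y i)"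
      using holds[OF 2(1)] by simp
    have "y i \<in> mod_values N"
      using assms(1) by (simp add: mod_solutions_def mod_points_def)
    then show ?thesis
    proof (cases "y i")
      case (Some u)
      then have "0 \<le> u" "u < int N"
        using \<open>y i \<in> mod_values N\<close> by (auto simp: mod_values_def)
      then have "((u + int r) mod int N - int r) mod int N = u"
        by (simp add: mod_diff_left_eq)
      then show ?thesis
        using Some ji 2(2) by simp
    qed (simp add: ji)
  qed
qed

lemma mod_solution_walk:
  assumes "y \<in> mod_solutions N C"
  shows "walk C i j k \<Longrightarrow> y i = map_option (\<lambda>u. (u + k) mod int N) (y j)"
proof (induction rule: walk.induct)
  case (walk_refl i)
  show ?case
    using assms mod_values_shift_0 by (simp add: mod_solutions_def mod_points_def)
next
  case (walk_step i j k l w)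
  then show ?case
    using mod_solution_edge[OF assms walk_step(2)]
    by (cases "y l") (simp_all add: mod_simps add_ac)
qed

text \<open>The modular model sees a cycle of nonzero weight only if some such weight is not divisible
  by the modulus.\<close>

definition short_cycles :: "nat \<Rightarrow> 'n constr set \<Rightarrow> bool" where
  "short_cycles N C \<longleftrightarrow>
     (\<forall>i. (\<exists>k. k \<noteq> 0 \<and> walk C i i k) \<longrightarrow> (\<exists>k. k \<noteq> 0 \<and> walk C i i k \<and> \<bar>k\<bar> < int N))"

lemma eventually_short_cycles:
  "eventually (\<lambda>N. short_cycles N (C :: ('n::finite) constr set)) sequentially"
proof -
  have "eventually (\<lambda>N. (\<exists>k. k \<noteq> 0 \<and> walk C i i k) \<longrightarrow>
      (\<exists>k. k \<noteq> 0 \<and> walk C i i k \<and> \<bar>k\<bar> < int N)) sequentially" for i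
  proof (cases "\<exists>k. k \<noteq> 0 \<and> walk C i i k")
    case True
    then obtain k where k: "k \<noteq> 0" "walk C i i k"
      by blast
    have "eventually (\<lambda>N. nat \<bar>k\<bar> < N) sequentially"
      by (rule eventually_gt_at_top)
    then show ?thesis
      by (rule eventually_mono) (use k in auto)
  qed auto
  then show ?thesis
    unfolding short_cycles_def by (rule eventually_all_finite)
qed

lemma mod_solution_vanishing:
  assumes "y \<in> mod_solutions N C" "short_cycles N C" "vanishing C i" shows "y i = None"
proof -
  consider j k where "walk C i j k" "Vanish j \<in> C" | "\<exists>k. k \<noteq> 0 \<and> walk C i i k"
    using assms(3) unfolding vanishing_def by fast
  then show ?thesis
  proof cases
    case 1
    then have "y j = None"
      using assms(1) by (fastforce simp: mod_solutions_def)
    then show ?thesis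
      using mod_solution_walk[OF assms(1) 1(1)] by simp
  next
    case 2
    then obtain k where k: "k \<noteq> 0" "walk C i i k" "\<bar>k\<bar> < int N"
      using assms(2) unfolding short_cycles_def by blast
    show ?thesis
    proof (rule ccontr)
      assume "y i \<noteq> None"
      then obtain u where u: "y i = Some u"
        by auto
      moreover have "y i \<in> mod_values N"
        using assms(1) by (simp add: mod_solutions_def mod_points_def)
      ultimately have "u mod int N = u"
        by (auto simp: mod_values_def)
      moreover have "(u + k) mod int N = u"
        using mod_solution_walk[OF assms(1) k(2)] u by simp
      ultimately have "int N dvd (u + k) - u"
        by (metis mod_eq_dvd_iff)
      then show False
        using k dvd_imp_le_int by force
    qed
  qed
qed

definition mod_extend :: "nat \<Rightarrow> 'n constr set \<Rightarrow> ('n \<Rightarrow> int option) \<Rightarrow> 'n \<Rightarrow> int option" where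
  "mod_extend N C f i =
     (if vanishing C i then None else map_option (\<lambda>u. (u + offset C i) mod int N) (f (rep C i)))"

lemma mod_extend_solution:
  assumes "N > 0" "f \<in> live_reps C \<rightarrow>\<^sub>E mod_values N"
  shows "mod_extend N C f \<in> mod_solutions N C"
proof -
  have "mod_extend N C f i \<in> mod_values N" for i
    using assms rep_in_live_reps[of C i] by (auto simp: mod_extend_def mod_values_def)
  moreover have "holds_mod N c (mod_extend N C f)" if c: "c \<in> C" for c
  proof (cases c)
    case (Vanish j)
    then show ?thesis
      using vanishing_if_Vanish[of j C] c by (simp add: mod_extend_def)
  next
    case (Ratio i j r)
    then have e: "constr_edge C i j (int r)"
      using c unfolding constr_edge_def by blast
    show ?thesis
    proof (cases "vanishing C i")
      case True
      then show ?thesis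
        using Ratio vanishing_walk_iff[OF walk_edge[OF e]] by (simp add: mod_extend_def)
    next
      case False
      note ij = constr_edge_offset[OF False e]
      show ?thesis
        using Ratio False ij by (cases "f (rep C i)") (simp_all add: mod_extend_def mod_simps add_ac)
    qed
  qed
  ultimately show ?thesis
    by (simp add: mod_solutions_def mod_points_def)
qed

lemma mod_extend_restrict:
  assumes "y \<in> mod_solutions N C" "short_cycles N C"
  shows "mod_extend N C (restrict y (live_reps C)) = y"
proof
  fix i
  show "mod_extend N C (restrict y (live_reps C)) i = y i"
  proof (cases "vanishing C i")
    case True
    then show ?thesis
      using mod_solution_vanishing[OF assms] by (simp add: mod_extend_def)
  next
    case False
    then show ?thesis
      using rep_in_live_reps[OF False] mod_solution_walk[OF assms(1) walk_rep, of i]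
      by (simp add: mod_extend_def)
  qed
qed

lemma restrict_mod_extend:
  assumes "f \<in> live_reps C \<rightarrow>\<^sub>E mod_values N"
  shows "restrict (mod_extend N C f) (live_reps C) = f"
proof
  fix \<rho>
  show "restrict (mod_extend N C f) (live_reps C) \<rho> = f \<rho>"
    using assms live_repsD[of \<rho> C] mod_values_shift_0 by (cases "\<rho> \<in> live_reps C") (auto simp: mod_extend_def)
qed

lemma card_mod_values: "card (mod_values N) = Suc N"
  by (simp add: mod_values_def card_image image_iff)

lemma card_mod_solutions:
  fixes C :: "('n::finite) constr set"
  assumes "N > 0" "short_cycles N C"
  shows "card (mod_solutions N C) = Suc N ^ card (live_reps C)"
proof -
  have "bij_betw (\<lambda>y. restrict y (live_reps C)) (mod_solutions N C) (live_reps C \<rightarrow>\<^sub>E mod_values N)"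
  proof (rule bij_betw_byWitness[where f' = "mod_extend N C"])
    show "\<forall>y\<in>mod_solutions N C. mod_extend N C (restrict y (live_reps C)) = y"
      using mod_extend_restrict[OF _ assms(2)] by blast
    show "\<forall>f\<in>live_reps C \<rightarrow>\<^sub>E mod_values N. restrict (mod_extend N C f) (live_reps C) = f"
      using restrict_mod_extend by blast
    show "(\<lambda>y. restrict y (live_reps C)) ` mod_solutions N C \<subseteq> live_reps C \<rightarrow>\<^sub>E mod_values N"
      by (auto simp: mod_solutions_def mod_points_def)
    show "mod_extend N C ` (live_reps C \<rightarrow>\<^sub>E mod_values N) \<subseteq> mod_solutions N C"
      using mod_extend_solution[OF assms(1)] by blast
  qed
  then have "card (mod_solutions N C) = card (live_reps C \<rightarrow>\<^sub>E mod_values N)"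
    by (rule bij_betw_same_card)
  then show ?thesis
    by (simp add: card_PiE card_mod_values)
qed

lemma finite_mod_points: "finite (mod_points N :: ('n::finite \<Rightarrow> int option) set)"
proof -
  have "mod_points N = (UNIV :: 'n set) \<rightarrow>\<^sub>E mod_values N"
    by (auto simp: mod_points_def)
  then show ?thesis
    by (simp add: finite_PiE mod_values_def)
qed

section \<open>The arrangement and its characteristic polynomial\<close>

definition constrs :: "nat \<Rightarrow> 'n constr set" where
  "constrs m = range Vanish \<union> {Ratio i j r | i j r. i \<noteq> j \<and> r \<le> m}"

lemma ball_constrs:
  "(\<forall>c\<in>constrs m. P c) \<longleftrightarrow> (\<forall>i. P (Vanish i)) \<and> (\<forall>i j r. i \<noteq> j \<longrightarrow> r \<le> m \<longrightarrow> P (Ratio i j r))"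
  by (auto simp: constrs_def)

lemma finite_constrs: "finite (constrs m :: ('n::finite) constr set)"
proof (rule finite_subset)
  show "constrs m \<subseteq> range Vanish \<union> (\<lambda>(i, j, r). Ratio i j r) ` (UNIV \<times> UNIV \<times> {..m})"
    by (auto simp: constrs_def image_iff)
qed auto

lemma normal_nonzero: "c \<in> constrs m \<Longrightarrow> normal b c \<noteq> 0"
  by (auto simp: constrs_def vec_eq_iff axis_def)

lemma constr_hyperplane_eq_cases:
  fixes c c' :: "('n::finite) constr"
  assumes "b > 1" "c \<in> constrs m" "c' \<in> constrs m" "constr_hyperplane b c = constr_hyperplane b c'"
  shows "c = c' \<or> (\<exists>i j. c = Ratio i j 0 \<and> c' = Ratio j i 0)"
proof -
  have "normal b c' \<in> span {normal b c}"
    using assms normal_nonzero by (intro hyperplane_eq_imp_normal_in_span) (auto simp: constr_hyperplane_def)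
  then obtain k where "normal b c' = k *\<^sub>R normal b c"
    by (auto simp: span_singleton)
  then have k: "normal b c' $ l = k * normal b c $ l" for l
    by simp
  have pow: "b^r \<noteq> 0" "b^r = b^r' \<longleftrightarrow> r = r'" "b^r * b^r' = 1 \<longleftrightarrow> r = 0 \<and> r' = 0" for r r'
    using assms(1) power_inject_exp[of b "r + r'" 0] by (auto simp: power_add[symmetric])
  consider i where "c = Vanish i" | i j r where "i \<noteq> j" "c = Ratio i j r"
    using assms(2) unfolding constrs_def by blast
  then show ?thesis
  proof cases
    case 1
    from assms(3) consider i' where "c' = Vanish i'" | i' j' r' where "i' \<noteq> j'" "c' = Ratio i' j' r'"
      unfolding constrs_def by blast
    then show ?thesis
    proof cases
      case 1
      then show ?thesis
        using \<open>c = Vanish i\<close> k[of i] k[of i'] by (auto simp: axis_def split: if_splits)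
    next
      case 2
      then show ?thesis
        using \<open>c = Vanish i\<close> k[of i] k[of i'] k[of j'] pow by (auto simp: axis_def split: if_splits)
    qed
  next
    case 2
    from assms(3) consider i' where "c' = Vanish i'" | i' j' r' where "i' \<noteq> j'" "c' = Ratio i' j' r'"
      unfolding constrs_def by blast
    then show ?thesis
    proof cases
      case 1
      then show ?thesis
        using 2 k[of i] k[of j] k[of i'] pow by (auto simp: axis_def split: if_splits)
    next
      case c': 2
      then show ?thesis
        using 2 k[of i] k[of j] k[of i'] k[of j'] pow by (auto simp: axis_def split: if_splits)
    qed
  qed
qed

lemma arrA_eq_constr_hyperplanes: "arrA a m = constr_hyperplane (real_of_int a) ` constrs m"
proof (intro set_eqI iffI)
  fix H assume "H \<in> arrA a m"
  then consider i where "H = hyperplane (axis i 1) 0"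
    | i j where "i \<noteq> j" "H = hyperplane (axis i 1 - axis j 1) 0"
    | i j r where "i \<noteq> j" "r \<le> m" "H = hyperplane (axis i 1 - (real_of_int a ^ r) *\<^sub>R axis j 1) 0"
    unfolding arrA_def by blast
  then show "H \<in> constr_hyperplane (real_of_int a) ` constrs m"
  proof cases
    case 1
    then show ?thesis
      unfolding image_iff by (intro bexI[of _ "Vanish i"]) (auto simp: constrs_def constr_hyperplane_def)
  next
    case 2
    then show ?thesis
      unfolding image_iff by (intro bexI[of _ "Ratio i j 0"]) (auto simp: constrs_def constr_hyperplane_def)
  next
    case 3
    then show ?thesis
      unfolding image_iff by (intro bexI[of _ "Ratio i j r"]) (auto simp: constrs_def constr_hyperplane_def)
  qed
next
  fix H assume "H \<in> constr_hyperplane (real_of_int a) ` constrs m"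
  then obtain c where c: "c \<in> constrs m" "H = constr_hyperplane (real_of_int a) c"
    by blast
  then consider i where "c = Vanish i" | i j r where "i \<noteq> j" "r \<le> m" "c = Ratio i j r"
    unfolding constrs_def by blast
  then show "H \<in> arrA a m"
  proof cases
    case 1
    then show ?thesis
      using c unfolding arrA_def constr_hyperplane_def by auto
  next
    case 2
    show ?thesis
    proof (cases "r = 0")
      case True
      then show ?thesis
        using c 2 unfolding arrA_def constr_hyperplane_def by auto
    next
      case False
      then show ?thesis
        using c 2 unfolding arrA_def constr_hyperplane_def
        by (intro UnI2 CollectI exI[of _ i] exI[of _ j] exI[of _ r]) auto
    qed
  qed
qed

lemma holds_mod_cong:
  fixes c c' :: "('n::finite) constr"
  assumes "b > 1" "c \<in> constrs m" "c' \<in> constrs m" "constr_hyperplane b c = constr_hyperplane b c'"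
    and "y \<in> mod_points N"
  shows "holds_mod N c y = holds_mod N c' y"
  using constr_hyperplane_eq_cases[OF assms(1-4)]
proof
  assume "\<exists>i j. c = Ratio i j 0 \<and> c' = Ratio j i 0"
  then obtain i j where "c = Ratio i j 0" "c' = Ratio j i 0"
    by blast
  moreover have "y i \<in> mod_values N" "y j \<in> mod_values N"
    using assms(5) by (auto simp: mod_points_def)
  ultimately show ?thesis
    by (auto simp: mod_values_def)
qed simp

lemma int_card_Diff_UN:
  assumes "finite A" "finite P" "\<And>a. a \<in> A \<Longrightarrow> X a \<subseteq> P"
  shows "int (card (P - \<Union> (X ` A))) = (\<Sum>B\<in>Pow A. (-1) ^ card B * int (card (P \<inter> \<Inter> (X ` B))))"
proof -
  let ?ne = "{B. B \<subseteq> A \<and> B \<noteq> {}}"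
  have sub: "\<Union> (X ` A) \<subseteq> P"
    using assms(3) by blast
  then have fin: "finite (\<Union> (X ` A))"
    using assms(2) by (rule finite_subset)
  have "int (card (P - \<Union> (X ` A))) = int (card P) - int (card (\<Union> (X ` A)))"
    using card_Diff_subset[OF fin sub] card_mono[OF assms(2) sub] by (simp add: of_nat_diff)
  also have "int (card (\<Union> (X ` A))) = (\<Sum>B\<in>?ne. - ((-1) ^ card B * int (card (P \<inter> \<Inter> (X ` B)))))"
  proof -
    interpret Incl_Excl finite "int \<circ> card"
      by unfold_locales (auto simp: card_Un_disjnt)
    have "P \<inter> \<Inter> (X ` B) = \<Inter> (X ` B)" if "B \<in> ?ne" for B
      using that assms(3) by blast
    then show ?thesis
      using restricted_indexed[of A X] assms finite_subset[OF assms(3) assms(2)] by simp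
  qed
  also have "int (card P) - (\<Sum>B\<in>?ne. - ((-1) ^ card B * int (card (P \<inter> \<Inter> (X ` B)))))
      = (\<Sum>B\<in>insert {} ?ne. (-1) ^ card B * int (card (P \<inter> \<Inter> (X ` B))))"
    using assms(1) by (simp add: sum_negf)
  also have "insert {} ?ne = Pow A"
    by auto
  finally show ?thesis .
qed

text \<open>\<open>x\<^sub>i = x\<^sub>j\<close> is cut out by both \<open>Ratio i j 0\<close> and \<open>Ratio j i 0\<close>, so the model of a hyperplane
  collects the points satisfying every constraint that defines it.\<close>

definition mod_points_on :: "real \<Rightarrow> nat \<Rightarrow> nat \<Rightarrow> (real^'n) set \<Rightarrow> ('n \<Rightarrow> int option) set" where
  "mod_points_on b m N H = {y \<in> mod_points N. \<forall>c\<in>constrs m. constr_hyperplane b c = H \<longrightarrow> holds_mod N c y}"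

lemma card_mod_points_on_Inter:
  fixes B :: "(real^'n::finite) set set"
  assumes "b > 1" "N > 0" "\<forall>C \<subseteq> constrs m. short_cycles N (C :: 'n constr set)"
    and "B \<subseteq> constr_hyperplane b ` constrs m"
  shows "card (mod_points N \<inter> \<Inter> (mod_points_on b m N ` B)) = Suc N ^ (CARD('n) - arr_rank B)"
proof -
  define C where "C = {c \<in> constrs m. constr_hyperplane b c \<in> B}"
  have C: "C \<subseteq> constrs m" "B = constr_hyperplane b ` C"
    using assms(4) by (auto simp: C_def)
  have "mod_points N \<inter> \<Inter> (mod_points_on b m N ` B) = mod_solutions N C"
    by (auto simp: mod_points_on_def mod_solutions_def C_def)
  moreover have "arr_rank B = CARD('n) - card (live_reps C)"
    unfolding C(2) using assms(1) normal_nonzero C(1) by (intro arr_rank_constr_hyperplanes) auto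
  moreover have "card (live_reps C) \<le> CARD('n)"
    by (rule card_mono) auto
  moreover have "card (mod_solutions N C) = Suc N ^ card (live_reps C)"
    using card_mod_solutions[OF assms(2)] assms(3) C(1) by blast
  ultimately show ?thesis
    by (simp add: diff_diff_cancel)
qed

lemma poly_char_poly_constr_hyperplanes:
  assumes "b > 1" "N > 0" "\<forall>C \<subseteq> constrs m. short_cycles N (C :: 'n::finite constr set)"
  shows "poly (char_poly (constr_hyperplane b ` constrs m :: (real^'n) set set)) (real N + 1)
    = real (card {y \<in> mod_points N. \<forall>c \<in> constrs m. \<not> holds_mod N c (y :: 'n \<Rightarrow> int option)})"
proof -
  define A where "A = (constr_hyperplane b ` constrs m :: (real^'n) set set)"
  have "0 \<in> \<Inter> B" if "B \<subseteq> A" for B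
    using that by (auto simp: A_def constr_hyperplane_def hyperplane_def)
  then have "{B. B \<subseteq> A \<and> \<Inter> B \<noteq> {}} = Pow A"
    by blast
  then have "poly (char_poly A) (real N + 1)
      = (\<Sum>B\<in>Pow A. (-1) ^ card B * (real N + 1) ^ (CARD('n) - arr_rank B))"
    by (simp add: char_poly_def poly_sum poly_monom)
  also have "\<dots> = real_of_int (\<Sum>B\<in>Pow A. (-1) ^ card B * int (card (mod_points N \<inter> \<Inter> (mod_points_on b m N ` B))))"
    using card_mod_points_on_Inter[OF assms] by (simp add: A_def add.commute)
  also have "\<dots> = real_of_int (int (card (mod_points N - \<Union> (mod_points_on b m N ` A))))"
    by (subst int_card_Diff_UN) (auto simp: A_def finite_constrs finite_mod_points mod_points_on_def)
  also have "mod_points N - \<Union> (mod_points_on b m N ` A) = {y \<in> mod_points N. \<forall>c \<in> constrs m. \<not> holds_mod N c y}"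
  proof -
    have "y \<notin> mod_points_on b m N (constr_hyperplane b c) \<longleftrightarrow> \<not> holds_mod N c y"
      if "y \<in> mod_points N" "c \<in> constrs m" for y c
      using holds_mod_cong[OF assms(1) _ that(2) _ that(1)] that unfolding mod_points_on_def by blast
    then show ?thesis
      unfolding A_def by blast
  qed
  finally show ?thesis
    by (simp add: A_def)
qed

section \<open>Spaced placements on a segment\<close>

definition spaced_placements :: "nat \<Rightarrow> 'i set \<Rightarrow> nat \<Rightarrow> ('i \<Rightarrow> int) set" where
  "spaced_placements m I L =
     {w \<in> I \<rightarrow>\<^sub>E {0..<int L}. \<forall>i\<in>I. \<forall>j\<in>I. i \<noteq> j \<longrightarrow> int m < \<bar>w i - w j\<bar>}"

lemma spaced_placements_range:
  "w \<in> spaced_placements m I L \<Longrightarrow> j \<in> I \<Longrightarrow> 0 \<le> w j \<and> w j < int L"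
  unfolding spaced_placements_def by auto

lemma spaced_placements_sep:
  "w \<in> spaced_placements m I L \<Longrightarrow> i \<in> I \<Longrightarrow> j \<in> I \<Longrightarrow> i \<noteq> j \<Longrightarrow> int m < \<bar>w i - w j\<bar>"
  unfolding spaced_placements_def by blast

lemma finite_spaced_placements: "finite I \<Longrightarrow> finite (spaced_placements m I L)"
  by (rule finite_subset[of _ "I \<rightarrow>\<^sub>E {0..<int L}"]) (auto simp: spaced_placements_def finite_PiE)

lemma spaced_placements_mono: "L \<le> L' \<Longrightarrow> spaced_placements m I L \<subseteq> spaced_placements m I L'"
  unfolding spaced_placements_def using PiE_mono[of I "\<lambda>_. {0..<int L}" "\<lambda>_. {0..<int L'}"] by auto

definition ffact :: "nat \<Rightarrow> nat \<Rightarrow> nat" where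
  "ffact X k = (\<Prod>i<k. X - i)"

lemma ffact_0 [simp]: "ffact X 0 = 1"
  by (simp add: ffact_def)

lemma ffact_eq_0: "X < k \<Longrightarrow> ffact X k = 0"
  unfolding ffact_def by (rule prod_zero) auto

lemma ffact_Suc: "ffact X (Suc k) = ffact X k * (X - k)"
  by (simp add: ffact_def)

lemma ffact_Suc_Suc_eq_mult: "ffact (Suc X) (Suc k) = Suc X * ffact X k"
  unfolding ffact_def prod.lessThan_Suc_shift by simp

lemma ffact_Suc_Suc: "ffact (Suc X) (Suc k) = ffact X (Suc k) + Suc k * ffact X k"
proof (cases "k \<le> X")
  case True
  have "ffact (Suc X) (Suc k) = Suc X * ffact X k"
    by (rule ffact_Suc_Suc_eq_mult)
  also have "\<dots> = (X - k) * ffact X k + Suc k * ffact X k"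
    using True by (simp add: add_mult_distrib[symmetric])
  also have "(X - k) * ffact X k = ffact X (Suc k)"
    by (simp add: ffact_Suc)
  finally show ?thesis .
next
  case False
  then show ?thesis
    by (simp add: ffact_Suc_Suc_eq_mult ffact_eq_0)
qed

lemma real_ffact: "k \<le> X \<Longrightarrow> real (ffact X k) = (\<Prod>i<k. real X - real i)"
  unfolding ffact_def by (simp add: of_nat_diff)

text \<open>Placing \<open>k\<close> labelled points in \<open>{0..<L}\<close> with pairwise distances larger than \<open>m\<close> amounts,
  after squeezing out the \<open>k - 1\<close> compulsory gaps, to placing \<open>k\<close> distinct points in
  \<open>{0..<L - (k - 1) * m}\<close>.\<close>

definition spaced_count :: "nat \<Rightarrow> nat \<Rightarrow> nat \<Rightarrow> nat" where
  "spaced_count m k L = ffact (L - (k - 1) * m) k"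

lemma spaced_count_Suc:
  "spaced_count m k (Suc L) = spaced_count m k L + k * spaced_count m (k - 1) (L - m)"
proof (cases k)
  case (Suc j)
  have shift: "L - m - (j - 1) * m = L - j * m" if "j \<ge> 1"
    using that by (cases j) (simp_all add: diff_diff_left)
  show ?thesis
  proof (cases "j * m \<le> L")
    case True
    have "ffact (L - m - (j - 1) * m) j = ffact (L - j * m) j"
      using shift by (cases "j = 0") simp_all
    moreover have "Suc L - j * m = Suc (L - j * m)"
      using True by (simp add: Suc_diff_le)
    ultimately show ?thesis
      using Suc ffact_Suc_Suc[of "L - j * m" j] by (simp add: spaced_count_def)
  next
    case False
    then have "j \<ge> 1"
      by (cases j) simp_all
    then have "L - m - (j - 1) * m = 0" "Suc L - j * m = 0" "L - j * m = 0"
      using False shift by simp_all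
    then show ?thesis
      using Suc \<open>j \<ge> 1\<close> by (simp add: spaced_count_def ffact_eq_0)
  qed
qed (simp add: spaced_count_def)

lemma card_spaced_placements_top:
  assumes "i \<in> I"
  shows "card {w \<in> spaced_placements m I (Suc L). w i = int L} = card (spaced_placements m (I - {i}) (L - m))"
proof -
  let ?T = "{w \<in> spaced_placements m I (Suc L). w i = int L}"
  have below: "0 \<le> x \<and> x < int (L - m) \<longleftrightarrow> 0 \<le> x \<and> x + int m < int L" for x
    by (cases "m \<le> L") (auto simp: of_nat_diff)
  have "bij_betw (\<lambda>w. restrict w (I - {i})) ?T (spaced_placements m (I - {i}) (L - m))"
  proof (rule bij_betw_byWitness[where f' = "\<lambda>v. v(i := int L)"])
    show "\<forall>w\<in>?T. (restrict w (I - {i}))(i := int L) = w"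
      by (auto simp: spaced_placements_def PiE_def extensional_def fun_eq_iff)
    show "\<forall>v\<in>spaced_placements m (I - {i}) (L - m). restrict (v(i := int L)) (I - {i}) = v"
      by (auto simp: spaced_placements_def PiE_def extensional_def fun_eq_iff)
    show "(\<lambda>w. restrict w (I - {i})) ` ?T \<subseteq> spaced_placements m (I - {i}) (L - m)"
    proof (rule image_subsetI)
      fix w assume w: "w \<in> ?T"
      have "w j \<in> {0..<int (L - m)}" if "j \<in> I - {i}" for j
        using spaced_placements_range[of w m I "Suc L" j] spaced_placements_sep[of w m I "Suc L" j i]
          below[of "w j"] w that assms
        by auto
      then have "restrict w (I - {i}) \<in> (I - {i}) \<rightarrow>\<^sub>E {0..<int (L - m)}"
        by (simp add: restrict_PiE_iff)
      then show "restrict w (I - {i}) \<in> spaced_placements m (I - {i}) (L - m)"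
        using w by (simp add: spaced_placements_def)
    qed
    show "(\<lambda>v. v(i := int L)) ` spaced_placements m (I - {i}) (L - m) \<subseteq> ?T"
    proof (rule image_subsetI)
      fix v assume v: "v \<in> spaced_placements m (I - {i}) (L - m)"
      have vj: "0 \<le> v j \<and> v j + int m < int L" if "j \<in> I - {i}" for j
        using spaced_placements_range[OF v that] below by blast
      have "v(i := int L) \<in> I \<rightarrow>\<^sub>E {0..<int (Suc L)}"
        using v vj assms by (force simp: spaced_placements_def PiE_iff extensional_def)
      moreover have "int m < \<bar>(v(i := int L)) j - (v(i := int L)) j'\<bar>"
        if "j \<in> I" "j' \<in> I" "j \<noteq> j'" for j j'
        using vj[of j] vj[of j'] spaced_placements_sep[OF v, of j j'] that by auto
      ultimately show "v(i := int L) \<in> ?T"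
        by (simp add: spaced_placements_def)
    qed
  qed
  then show ?thesis
    by (rule bij_betw_same_card)
qed

lemma spaced_placements_Suc:
  "spaced_placements m I (Suc L)
    = spaced_placements m I L \<union> (\<Union>i\<in>I. {w \<in> spaced_placements m I (Suc L). w i = int L})"
proof (intro set_eqI iffI)
  fix w assume w: "w \<in> spaced_placements m I (Suc L)"
  show "w \<in> spaced_placements m I L \<union> (\<Union>i\<in>I. {w \<in> spaced_placements m I (Suc L). w i = int L})"
  proof (cases "\<exists>i\<in>I. w i = int L")
    case True
    then show ?thesis
      using w by blast
  next
    case False
    then have "w i \<in> {0..<int L}" if "i \<in> I" for i
      using spaced_placements_range[OF w that] that False by auto
    then have "w \<in> I \<rightarrow>\<^sub>E {0..<int L}"
      using w by (simp add: spaced_placements_def PiE_iff)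
    then have "w \<in> spaced_placements m I L"
      using w by (simp add: spaced_placements_def)
    then show ?thesis
      by blast
  qed
next
  fix w
  assume "w \<in> spaced_placements m I L \<union> (\<Union>i\<in>I. {w \<in> spaced_placements m I (Suc L). w i = int L})"
  then show "w \<in> spaced_placements m I (Suc L)"
    using spaced_placements_mono[of L "Suc L" m I, OF le_SucI[OF order_refl]] by blast
qed

lemma card_spaced_placements_Suc:
  assumes "finite I"
  shows "card (spaced_placements m I (Suc L))
    = card (spaced_placements m I L) + (\<Sum>i\<in>I. card (spaced_placements m (I - {i}) (L - m)))"
proof -
  let ?T = "\<lambda>i. {w \<in> spaced_placements m I (Suc L). w i = int L}"
  have "w i \<noteq> int L" if "w \<in> spaced_placements m I L" "i \<in> I" for w i
    using spaced_placements_range[OF that] by simp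
  then have disjoint: "spaced_placements m I L \<inter> (\<Union>i\<in>I. ?T i) = {}"
    by blast
  have disjoint_tops: "?T i \<inter> ?T j = {}" if "i \<in> I" "j \<in> I" "i \<noteq> j" for i j
    using spaced_placements_sep[of _ m I "Suc L" i j] that by fastforce
  have finite_top: "finite (?T i)" for i
    using finite_spaced_placements[OF assms] by simp
  have "card (spaced_placements m I (Suc L)) = card (spaced_placements m I L \<union> (\<Union>i\<in>I. ?T i))"
    using spaced_placements_Suc by (rule arg_cong)
  also have "\<dots> = card (spaced_placements m I L) + card (\<Union>i\<in>I. ?T i)"
    by (rule card_Un_disjoint) (use finite_spaced_placements[OF assms] finite_top assms disjoint in auto)
  also have "card (\<Union>i\<in>I. ?T i) = (\<Sum>i\<in>I. card (?T i))"
    by (rule card_UN_disjoint) (use assms finite_top disjoint_tops in auto)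
  also have "\<dots> = (\<Sum>i\<in>I. card (spaced_placements m (I - {i}) (L - m)))"
    by (rule sum.cong) (simp_all add: card_spaced_placements_top)
  finally show ?thesis .
qed

lemma card_spaced_placements:
  "finite I \<Longrightarrow> card (spaced_placements m I L) = spaced_count m (card I) L"
proof (induction L arbitrary: I rule: less_induct)
  case (less L)
  show ?case
  proof (cases L)
    case 0
    then show ?thesis
      by (cases "I = {}") (auto simp: spaced_placements_def spaced_count_def PiE_eq_empty_iff
          ffact_eq_0 card_gt_0_iff less.prems)
  next
    case (Suc L')
    have "card (spaced_placements m I L)
        = spaced_count m (card I) L' + (\<Sum>i\<in>I. spaced_count m (card I - 1) (L' - m))"
      using less Suc card_spaced_placements_Suc[OF less.prems, of m L'] by (simp add: card_Diff_singleton)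
    then show ?thesis
      using Suc by (simp add: spaced_count_Suc)
  qed
qed

section \<open>Spaced placements on a cycle\<close>

definition cyclic_placements :: "nat \<Rightarrow> nat \<Rightarrow> 'i set \<Rightarrow> ('i \<Rightarrow> int) set" where
  "cyclic_placements N m I =
     {z \<in> I \<rightarrow>\<^sub>E {0..<int N}. \<forall>i\<in>I. \<forall>j\<in>I. i \<noteq> j \<longrightarrow> int m < (z i - z j) mod int N}"

lemma mod_neg_trivial:
  fixes a b :: int assumes "- b \<le> a" "a < 0" shows "a mod b = a + b"
proof -
  have "(a + b) mod b = a + b"
    using assms by (intro mod_pos_pos_trivial) auto
  then show ?thesis
    by simp
qed

lemma cyclic_distance_iff:
  fixes p q :: int
  assumes "0 \<le> p" "p < int N" "0 \<le> q" "q < int N"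
  shows "int m < (p - q) mod int N \<and> int m < (q - p) mod int N
    \<longleftrightarrow> int m < \<bar>p - q\<bar> \<and> \<bar>p - q\<bar> < int N - int m"
proof (cases "p = q")
  case False
  then show ?thesis
    using assms mod_neg_trivial[of "int N" "p - q"] mod_neg_trivial[of "int N" "q - p"]
    by (cases "q < p") (auto simp: mod_pos_pos_trivial)
qed simp

lemma eq_add_mod_iff:
  fixes p q r :: int
  assumes "0 \<le> p" "p < n" "0 \<le> r" "r < n"
  shows "p = (q + r) mod n \<longleftrightarrow> (p - q) mod n = r"
proof -
  have "p = (q + r) mod n \<longleftrightarrow> p mod n = (q + r) mod n"
    using assms by simp
  also have "\<dots> \<longleftrightarrow> (p - q) mod n = r mod n"
    by (simp add: mod_eq_dvd_iff algebra_simps)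
  also have "\<dots> \<longleftrightarrow> (p - q) mod n = r"
    using assms by simp
  finally show ?thesis .
qed

lemma avoids_constrs_iff:
  assumes "m < N" "\<And>i. 0 \<le> z i \<and> z i < int N"
  shows "(\<forall>c\<in>constrs m. \<not> holds_mod N c (\<lambda>i. Some (z i)))
    \<longleftrightarrow> (\<forall>i j. i \<noteq> j \<longrightarrow> int m < (z i - z j) mod int N)"
proof -
  have "holds_mod N (Ratio i j r) (\<lambda>i. Some (z i)) \<longleftrightarrow> (z i - z j) mod int N = int r"
    if "r \<le> m" for i j r
    using assms that by (simp add: eq_add_mod_iff)
  moreover have "(\<forall>r\<le>m. (z i - z j) mod int N \<noteq> int r) \<longleftrightarrow> int m < (z i - z j) mod int N" for i j
  proof -
    have "0 \<le> (z i - z j) mod int N"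
      using assms(1) by simp
    then show ?thesis
      by (metis nonneg_int_cases not_le of_nat_le_iff)
  qed
  ultimately show ?thesis
    unfolding ball_constrs by auto
qed

lemma mod_points_avoiding_constrs:
  assumes "m < N"
  shows "{y \<in> mod_points N. \<forall>c \<in> constrs m. \<not> holds_mod N c (y :: 'n \<Rightarrow> int option)}
    = (\<lambda>z i. Some (z i)) ` cyclic_placements N m UNIV"
proof -
  have cyclic_iff: "z \<in> cyclic_placements N m UNIV \<longleftrightarrow>
      (\<forall>i. 0 \<le> z i \<and> z i < int N) \<and> (\<forall>i j. i \<noteq> j \<longrightarrow> int m < (z i - z j) mod int N)" for z
    by (auto simp: cyclic_placements_def)
  show ?thesis
  proof (intro set_eqI iffI)
    fix y :: "'n \<Rightarrow> int option"
    assume y: "y \<in> {y \<in> mod_points N. \<forall>c \<in> constrs m. \<not> holds_mod N c y}"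
    then have "y i \<noteq> None" for i
      by (simp add: ball_constrs)
    define z where "z i = the (y i)" for i
    have z: "y = (\<lambda>i. Some (z i))"
      using \<open>\<And>i. y i \<noteq> None\<close> by (auto simp: z_def)
    have range: "0 \<le> z i \<and> z i < int N" for i
      using y unfolding z by (auto simp: mod_points_def mod_values_def)
    moreover have "\<forall>c\<in>constrs m. \<not> holds_mod N c (\<lambda>i. Some (z i))"
      using y unfolding z by simp
    ultimately have "z \<in> cyclic_placements N m UNIV"
      unfolding cyclic_iff avoids_constrs_iff[OF assms range] by simp
    then show "y \<in> (\<lambda>z i. Some (z i)) ` cyclic_placements N m UNIV"
      unfolding z by blast
  next
    fix y assume "y \<in> (\<lambda>z i. Some (z i)) ` cyclic_placements N m UNIV"
    then obtain z where z: "z \<in> cyclic_placements N m UNIV" "y = (\<lambda>i. Some (z i))"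
      by blast
    then have range: "0 \<le> z i \<and> z i < int N" for i
      unfolding cyclic_iff by blast
    then have "y \<in> mod_points N"
      unfolding z(2) by (auto simp: mod_points_def mod_values_def)
    moreover have "\<forall>c\<in>constrs m. \<not> holds_mod N c (\<lambda>i. Some (z i))"
      using z(1) unfolding cyclic_iff avoids_constrs_iff[OF assms range] by simp
    ultimately show "y \<in> {y \<in> mod_points N. \<forall>c \<in> constrs m. \<not> holds_mod N c y}"
      using z(2) by simp
  qed
qed

lemma card_mod_points_avoiding_constrs:
  assumes "m < N"
  shows "card {y \<in> mod_points N. \<forall>c \<in> constrs m. \<not> holds_mod N c (y :: 'n \<Rightarrow> int option)}
    = card (cyclic_placements N m (UNIV :: 'n set))"
proof -
  have "inj_on (\<lambda>z i. Some (z i)) (cyclic_placements N m UNIV)"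
    by (simp add: inj_on_def fun_eq_iff)
  then show ?thesis
    using mod_points_avoiding_constrs[OF assms] by (metis card_image)
qed

lemma cyclic_placements_iff:
  assumes "z \<in> I \<rightarrow>\<^sub>E {0..<int N}"
  shows "z \<in> cyclic_placements N m I \<longleftrightarrow>
     (\<forall>i\<in>I. \<forall>j\<in>I. i \<noteq> j \<longrightarrow> int m < \<bar>z i - z j\<bar> \<and> \<bar>z i - z j\<bar> < int N - int m)"
proof -
  have dist: "int m < (z i - z j) mod int N \<and> int m < (z j - z i) mod int N
      \<longleftrightarrow> int m < \<bar>z i - z j\<bar> \<and> \<bar>z i - z j\<bar> < int N - int m"
    if "i \<in> I" "j \<in> I" for i j
    using assms that by (intro cyclic_distance_iff) auto
  have "z \<in> cyclic_placements N m I \<longleftrightarrow> (\<forall>i\<in>I. \<forall>j\<in>I. i \<noteq> j \<longrightarrow>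
      int m < (z i - z j) mod int N \<and> int m < (z j - z i) mod int N)"
    using assms unfolding cyclic_placements_def by auto
  also have "\<dots> \<longleftrightarrow> (\<forall>i\<in>I. \<forall>j\<in>I. i \<noteq> j \<longrightarrow> int m < \<bar>z i - z j\<bar> \<and> \<bar>z i - z j\<bar> < int N - int m)"
    by (simp add: dist cong: ball_cong)
  finally show ?thesis .
qed

definition rotate_mod :: "nat \<Rightarrow> 'i set \<Rightarrow> int \<Rightarrow> ('i \<Rightarrow> int) \<Rightarrow> 'i \<Rightarrow> int" where
  "rotate_mod N I s z = (\<lambda>j\<in>I. (z j + s) mod int N)"

lemma rotate_mod_cyclic_placements:
  assumes "N > 0" "z \<in> cyclic_placements N m I"
  shows "rotate_mod N I s z \<in> cyclic_placements N m I"
proof -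
  have "rotate_mod N I s z \<in> I \<rightarrow>\<^sub>E {0..<int N}"
    using assms(1) by (simp add: rotate_mod_def)
  moreover have "(rotate_mod N I s z i - rotate_mod N I s z j) mod int N = (z i - z j) mod int N"
    if "i \<in> I" "j \<in> I" for i j
    using that mod_diff_eq[of "z i + s" "int N" "z j + s"] by (simp add: rotate_mod_def)
  ultimately show ?thesis
    using assms(2) unfolding cyclic_placements_def by simp
qed

lemma rotate_mod_rotate_mod:
  assumes "z \<in> I \<rightarrow>\<^sub>E {0..<int N}"
  shows "rotate_mod N I s (rotate_mod N I (- s) z) = z"
proof
  fix j
  show "rotate_mod N I s (rotate_mod N I (- s) z) j = z j"
    using assms by (cases "j \<in> I") (auto simp: rotate_mod_def mod_add_left_eq PiE_iff extensional_def)
qed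

lemma card_cyclic_placements_anchor:
  assumes "N > 0" "i0 \<in> I"
  shows "card (cyclic_placements N m I) = N * card {z \<in> cyclic_placements N m I. z i0 = 0}"
proof -
  let ?Z = "{z \<in> cyclic_placements N m I. z i0 = 0}"
  have range: "z \<in> I \<rightarrow>\<^sub>E {0..<int N}" if "z \<in> cyclic_placements N m I" for z
    using that by (simp add: cyclic_placements_def)
  have "bij_betw (\<lambda>(s, z). rotate_mod N I s z) ({0..<int N} \<times> ?Z) (cyclic_placements N m I)"
  proof (rule bij_betw_byWitness[where f' = "\<lambda>z. (z i0, rotate_mod N I (- z i0) z)"])
    show "\<forall>p\<in>{0..<int N} \<times> ?Z. (\<lambda>z. (z i0, rotate_mod N I (- z i0) z)) ((\<lambda>(s, z). rotate_mod N I s z) p) = p"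
    proof
      fix p assume "p \<in> {0..<int N} \<times> ?Z"
      then obtain s z where p: "p = (s, z)" and s: "s \<in> {0..<int N}"
        and z: "z \<in> cyclic_placements N m I" "z i0 = 0"
        by blast
      have "rotate_mod N I s z i0 = s"
        using s z(2) assms(2) by (simp add: rotate_mod_def)
      moreover have "rotate_mod N I (- s) (rotate_mod N I s z) = z"
        using rotate_mod_rotate_mod[OF range[OF z(1)], of "- s"] by simp
      ultimately show "(\<lambda>z. (z i0, rotate_mod N I (- z i0) z)) ((\<lambda>(s, z). rotate_mod N I s z) p) = p"
        by (simp add: p)
    qed
    show "\<forall>z\<in>cyclic_placements N m I. (\<lambda>(s, z). rotate_mod N I s z) (z i0, rotate_mod N I (- z i0) z) = z"
      using rotate_mod_rotate_mod[OF range] by simp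
    show "(\<lambda>(s, z). rotate_mod N I s z) ` ({0..<int N} \<times> ?Z) \<subseteq> cyclic_placements N m I"
      using rotate_mod_cyclic_placements[OF assms(1)] by auto
    show "(\<lambda>z. (z i0, rotate_mod N I (- z i0) z)) ` cyclic_placements N m I \<subseteq> {0..<int N} \<times> ?Z"
    proof (rule image_subsetI)
      fix z assume z: "z \<in> cyclic_placements N m I"
      have "z i0 \<in> {0..<int N}"
        using range[OF z] assms(2) by blast
      moreover have "rotate_mod N I (- z i0) z \<in> ?Z"
        using rotate_mod_cyclic_placements[OF assms(1) z, of "- z i0"] assms(2) by (simp add: rotate_mod_def)
      ultimately show "(z i0, rotate_mod N I (- z i0) z) \<in> {0..<int N} \<times> ?Z"
        by simp
    qed
  qed
  then have "card ({0..<int N} \<times> ?Z) = card (cyclic_placements N m I)"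
    by (rule bij_betw_same_card)
  then show ?thesis
    by (simp add: card_cartesian_product)
qed

lemma anchored_cyclic_placements_iff:
  assumes "z \<in> I \<rightarrow>\<^sub>E {0..<int N}" "i0 \<in> I" "z i0 = 0"
  shows "z \<in> cyclic_placements N m I \<longleftrightarrow>
    (\<forall>j\<in>I - {i0}. int m < z j \<and> z j < int N - int m) \<and>
    (\<forall>i\<in>I - {i0}. \<forall>j\<in>I - {i0}. i \<noteq> j \<longrightarrow> int m < \<bar>z i - z j\<bar>)"
proof -
  have "0 \<le> z j" if "j \<in> I" for j
    using assms(1) that by auto
  then show ?thesis
    unfolding cyclic_placements_iff[OF assms(1)] using assms(2,3)
    by (smt (verit, ccfv_threshold) Diff_iff singletonD singletonI)
qed

definition unfold_placement :: "nat \<Rightarrow> 'i set \<Rightarrow> 'i \<Rightarrow> ('i \<Rightarrow> int) \<Rightarrow> 'i \<Rightarrow> int" where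
  "unfold_placement m I i0 w = (\<lambda>j\<in>I. if j = i0 then 0 else w j + int m + 1)"

lemma unfold_placement_cyclic:
  assumes "2 * m + 1 < N" "i0 \<in> I" "w \<in> spaced_placements m (I - {i0}) (N - 2 * m - 1)"
  shows "unfold_placement m I i0 w \<in> cyclic_placements N m I" "unfold_placement m I i0 w i0 = 0"
proof -
  let ?z = "unfold_placement m I i0 w"
  have w: "0 \<le> w j \<and> w j < int N - 2 * int m - 1" if "j \<in> I" "j \<noteq> i0" for j
    using spaced_placements_range[OF assms(3), of j] that assms(1) by simp
  then have range: "?z \<in> I \<rightarrow>\<^sub>E {0..<int N}"
    unfolding unfold_placement_def restrict_PiE_iff using assms(1) by fastforce
  show zero: "?z i0 = 0"
    using assms(2) by (simp add: unfold_placement_def)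
  have "\<forall>j\<in>I - {i0}. int m < ?z j \<and> ?z j < int N - int m"
  proof
    fix j assume "j \<in> I - {i0}"
    then show "int m < ?z j \<and> ?z j < int N - int m"
      using w[of j] by (simp add: unfold_placement_def)
  qed
  moreover have "\<forall>i\<in>I - {i0}. \<forall>j\<in>I - {i0}. i \<noteq> j \<longrightarrow> int m < \<bar>?z i - ?z j\<bar>"
    using assms(3) by (simp add: unfold_placement_def spaced_placements_def)
  ultimately show "?z \<in> cyclic_placements N m I"
    unfolding anchored_cyclic_placements_iff[OF range assms(2) zero] by blast
qed

lemma cut_placement_spaced:
  assumes "2 * m + 1 < N" "i0 \<in> I" "z \<in> cyclic_placements N m I" "z i0 = 0"
  shows "(\<lambda>j\<in>I - {i0}. z j - int m - 1) \<in> spaced_placements m (I - {i0}) (N - 2 * m - 1)"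
proof -
  have range: "z \<in> I \<rightarrow>\<^sub>E {0..<int N}"
    using assms(3) by (simp add: cyclic_placements_def)
  then have "\<forall>j\<in>I - {i0}. int m < z j \<and> z j < int N - int m"
    and sep: "\<forall>i\<in>I - {i0}. \<forall>j\<in>I - {i0}. i \<noteq> j \<longrightarrow> int m < \<bar>z i - z j\<bar>"
    using assms(3) anchored_cyclic_placements_iff[OF range assms(2,4)] by simp_all
  then have "\<forall>j\<in>I - {i0}. z j - int m - 1 \<in> {0..<int (N - 2 * m - 1)}"
    using assms(1) by force
  then show ?thesis
    using sep by (simp add: spaced_placements_def)
qed

lemma card_anchored_cyclic_placements:
  assumes "2 * m + 1 < N" "i0 \<in> I"
  shows "card {z \<in> cyclic_placements N m I. z i0 = 0}
    = card (spaced_placements m (I - {i0}) (N - 2 * m - 1))"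
proof -
  let ?Z = "{z \<in> cyclic_placements N m I. z i0 = 0}"
  let ?W = "spaced_placements m (I - {i0}) (N - 2 * m - 1)"
  have "bij_betw (unfold_placement m I i0) ?W ?Z"
  proof (rule bij_betw_byWitness[where f' = "\<lambda>z. \<lambda>j\<in>I - {i0}. z j - int m - 1"])
    show "\<forall>w\<in>?W. (\<lambda>j\<in>I - {i0}. unfold_placement m I i0 w j - int m - 1) = w"
    proof
      fix w assume "w \<in> ?W"
      then have "w \<in> extensional (I - {i0})"
        by (simp add: spaced_placements_def PiE_def)
      then show "(\<lambda>j\<in>I - {i0}. unfold_placement m I i0 w j - int m - 1) = w"
        by (simp add: unfold_placement_def fun_eq_iff extensional_def)
    qed
    show "\<forall>z\<in>?Z. unfold_placement m I i0 (\<lambda>j\<in>I - {i0}. z j - int m - 1) = z"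
    proof
      fix z assume "z \<in> ?Z"
      then have "z \<in> extensional I" "z i0 = 0"
        by (simp_all add: cyclic_placements_def PiE_def)
      then show "unfold_placement m I i0 (\<lambda>j\<in>I - {i0}. z j - int m - 1) = z"
        by (simp add: unfold_placement_def fun_eq_iff extensional_def)
    qed
    show "unfold_placement m I i0 ` ?W \<subseteq> ?Z"
      using unfold_placement_cyclic[OF assms] by blast
    show "(\<lambda>z. \<lambda>j\<in>I - {i0}. z j - int m - 1) ` ?Z \<subseteq> ?W"
      using cut_placement_spaced[OF assms] by blast
  qed
  then show ?thesis
    by (rule bij_betw_same_card[symmetric])
qed

lemma poly_eqI_eventually:
  fixes p q :: "'a :: {idom, ring_char_0} poly"
  assumes "eventually (\<lambda>N. poly p (of_nat N) = poly q (of_nat N)) sequentially"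
  shows "p = q"
proof (rule ccontr)
  assume "p \<noteq> q"
  then have "finite {x. poly (p - q) x = 0}"
    by (intro poly_roots_finite) simp
  moreover obtain N0 where "\<And>N. N \<ge> N0 \<Longrightarrow> poly p (of_nat N) = poly q (of_nat N)"
    using assms unfolding eventually_sequentially by blast
  then have "of_nat ` {N0..} \<subseteq> {x. poly (p - q) x = 0}"
    by auto
  ultimately have "finite (of_nat ` {N0..} :: 'a set)"
    by (rule finite_subset[rotated])
  then show False
    using finite_imageD[OF _ inj_on_subset[OF inj_of_nat subset_UNIV]] infinite_Ici by blast
qed

lemma poly_char_poly_arrA_large:
  fixes a :: int
  assumes "a \<ge> 2" "2 * m + 1 < N" "\<forall>C \<subseteq> constrs m. short_cycles N (C :: 'n::finite constr set)"
  shows "poly (char_poly (arrA a m :: (real^'n) set set)) (real N + 1)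
    = real N * real (spaced_count m (CARD('n) - 1) (N - 2 * m - 1))"
proof -
  fix i0 :: 'n
  have "poly (char_poly (arrA a m :: (real^'n) set set)) (real N + 1)
      = real (card {y \<in> mod_points N. \<forall>c \<in> constrs m. \<not> holds_mod N c (y :: 'n \<Rightarrow> int option)})"
    unfolding arrA_eq_constr_hyperplanes using assms by (intro poly_char_poly_constr_hyperplanes) auto
  also have "\<dots> = real (card (cyclic_placements N m (UNIV :: 'n set)))"
    using card_mod_points_avoiding_constrs[of m N] assms(2) by simp
  also have "card (cyclic_placements N m (UNIV :: 'n set))
      = N * card (spaced_placements m (UNIV - {i0}) (N - 2 * m - 1))"
    using card_cyclic_placements_anchor[of N i0 UNIV m] card_anchored_cyclic_placements[OF assms(2), of i0 UNIV]
      assms(2) by simp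
  also have "card (spaced_placements m (UNIV - {i0}) (N - 2 * m - 1)) = spaced_count m (CARD('n) - 1) (N - 2 * m - 1)"
    by (simp add: card_spaced_placements card_Diff_singleton)
  finally show ?thesis
    by simp
qed

lemma spaced_count_eq_prod:
  assumes "n \<ge> 1" "n * (m + 1) \<le> N"
  shows "real (spaced_count m (n - 1) (N - 2 * m - 1))
    = (\<Prod>j\<in>{1..n - 1}. real N - (real m * real n + real j))"
proof (cases "n = 1")
  case False
  define X where "X = N - n * m - 1"
  have "N - 2 * m - 1 - (n - 1 - 1) * m = X"
    using False assms unfolding X_def
    by (cases n) (simp_all add: diff_diff_left algebra_simps)
  moreover have "n - 1 \<le> X" "real X = real N - real n * real m - 1"
    using assms unfolding X_def by (simp_all add: algebra_simps of_nat_diff)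
  ultimately have "real (spaced_count m (n - 1) (N - 2 * m - 1)) = (\<Prod>i<n - 1. real X - real i)"
    by (simp add: spaced_count_def real_ffact)
  also have "\<dots> = (\<Prod>i<n - 1. real N - (real m * real n + real (Suc i)))"
    using \<open>real X = _\<close> by (intro prod.cong) (simp_all add: algebra_simps)
  also have "\<dots> = (\<Prod>j\<in>{1..n - 1}. real N - (real m * real n + real j))"
    using prod.atLeast1_atMost_eq[of "\<lambda>j. real N - (real m * real n + real j)" "n - 1"] by simp
  finally show ?thesis .
qed (simp add: spaced_count_def)

theorem proposition4p2:
  fixes a :: int and m :: nat
  assumes "a \<ge> 2" and "m \<ge> 1"
  shows "char_poly (arrA a m :: (real^'n) set set) =
    [:-1, 1:] * (\<Prod>j\<in>{1..CARD('n) - 1}.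
        [: - (1 + of_nat m * of_nat CARD('n) + of_nat j), 1 :])"
    (is "?P = ?R")
proof (rule poly_eqI_eventually)
  have "eventually (\<lambda>N. \<forall>C \<in> Pow (constrs m). short_cycles N (C :: 'n constr set)) sequentially"
    using finite_constrs eventually_short_cycles by (intro eventually_ball_finite) auto
  moreover have "eventually (\<lambda>N. CARD('n) * (m + 1) \<le> N \<and> 2 * m + 1 < N) sequentially"
    using eventually_ge_at_top eventually_gt_at_top by (rule eventually_conj)
  ultimately have "eventually (\<lambda>N. poly ?P (real N + 1) = poly ?R (real N + 1)) sequentially"
  proof eventually_elim
    case (elim N)
    then have "poly ?P (real N + 1) = real N * real (spaced_count m (CARD('n) - 1) (N - 2 * m - 1))"
      by (intro poly_char_poly_arrA_large[OF assms(1)]) auto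
    also have "\<dots> = poly ?R (real N + 1)"
      using spaced_count_eq_prod[of "CARD('n)" m N] elim by (simp add: poly_prod algebra_simps)
    finally show ?case .
  qed
  then show "eventually (\<lambda>N. poly ?P (of_nat N) = poly ?R (of_nat N)) sequentially"
    by (subst eventually_sequentially_Suc[symmetric]) (simp add: add.commute)
qed

end
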